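(* Let $r\ge 2$ and $n\ge 1$, let $V$ be a set of $rn$ vertices, and let $\mathcal{E}$ be the set of all $r$-element subsets of $V$. Choose elements of $\mathcal{E}$ one at a time in a uniformly random order (without repetition), stopping as soon as every vertex of $V$ lies in at least one chosen element; let $G_\omega$ be the resulting $r$-uniform hypergraph on $V$. Then the expected number of matchings in $G_\omega$ is $$\frac{(rn)!}{(r!)^n\, n!}\sum_{i=1}^r (-1)^{i-1}\frac{\binom{r}{i}}{\binom{\binom{nr}{r}-\binom{nr-i}{r}+n-1}{n}}.$$
   Context: A matching in an $r$-uniform hypergraph on vertex set $V$ is a set $M$ of its edges such that every vertex of $V$ lies in exactly one edge of $M$. *)

theory Defs
  imports "HOL-Probability.Probability" "HOL-Combinatorics.Multiset_Permutations"
begin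

definition all_edges :: "'a set \<Rightarrow> nat \<Rightarrow> 'a set set" where
  "all_edges V r = {e. e \<subseteq> V \<and> card e = r}"

definition stop_time :: "'a set \<Rightarrow> 'a set list \<Rightarrow> nat" where
  "stop_time V xs = (LEAST k. \<Union>(set (take k xs)) = V)"

definition stopped_graph :: "'a set \<Rightarrow> 'a set list \<Rightarrow> 'a set set" where
  "stopped_graph V xs = set (take (stop_time V xs) xs)"

definition is_matching :: "'a set \<Rightarrow> 'a set set \<Rightarrow> 'a set set \<Rightarrow> bool" where
  "is_matching V H M \<longleftrightarrow> M \<subseteq> H \<and> (\<forall>v\<in>V. \<exists>!e. e \<in> M \<and> v \<in> e)"

definition num_matchings :: "'a set \<Rightarrow> 'a set set \<Rightarrow> nat" where
  "num_matchings V H = card {M. is_matching V H M}"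

end

theory Submission
  imports Defs
begin

text \<open>
  By linearity of expectation, the expected number of matchings of the stopped hypergraph is the
  number (rn)!/((r!)^n n!) of perfect matchings of the complete r-uniform hypergraph times the
  probability that a fixed perfect matching M survives, i.e. that the last edge of M arrives before
  every vertex is covered. Equivalently, some vertex v has no edge arriving before the last edge
  of M. Such a v lies in a unique edge e of M, which is then the last edge of M, so the event
  splits disjointly over the n edges of M. Inclusion-exclusion over the set S of witnessing
  vertices in e reduces everything to the event that e comes last among the n edges of M and
  first among the w edges meeting S, where w = C(rn,r) - C(rn-|S|,r); in a uniformly random
  order this has probability (n-1)! (w-1)! / (n+w-1)! = 1 / (n C(n+w-1,n)).
\<close>

section \<open>Orderings\<close>

fun position :: "'a list \<Rightarrow> 'a \<Rightarrow> nat" where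
  "position [] y = 0"
| "position (x # xs) y = (if x = y then 0 else Suc (position xs y))"

lemma nth_position: "y \<in> set xs \<Longrightarrow> xs ! position xs y = y"
  by (induction xs) auto

lemma inj_on_position: "inj_on (position xs) (set xs)"
  by (metis inj_onI nth_position)

lemma in_set_take_iff_position: "y \<in> set (take k xs) \<longleftrightarrow> y \<in> set xs \<and> position xs y < k"
proof (induction xs arbitrary: k)
  case (Cons x xs)
  then show ?case by (cases k) auto
qed simp

definition precedes :: "'a list \<Rightarrow> 'a set \<Rightarrow> 'a set \<Rightarrow> bool" where
  "precedes xs A B \<longleftrightarrow> (\<forall>a\<in>A. \<forall>b\<in>B. position xs a \<le> position xs b)"

lemma precedes_Cons:
  "precedes (x # xs) A B \<longleftrightarrow> (x \<in> B \<longrightarrow> A \<subseteq> {x}) \<and> precedes xs (A - {x}) (B - {x})"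
  unfolding precedes_def by auto

lemma card_filter_permutations_of_set:
  assumes "finite E" "E \<noteq> {}"
  shows "card {xs \<in> permutations_of_set E. P xs} =
           (\<Sum>x\<in>E. card {xs \<in> permutations_of_set (E - {x}). P (x # xs)})"
proof -
  have "{xs \<in> permutations_of_set E. P xs} =
          (\<Union>x\<in>E. (#) x ` {xs \<in> permutations_of_set (E - {x}). P (x # xs)})"
    by (auto simp: permutations_of_set_nonempty[OF assms(2)])
  also have "card \<dots> = (\<Sum>x\<in>E. card ((#) x ` {xs \<in> permutations_of_set (E - {x}). P (x # xs)}))"
    by (rule card_UN_disjoint) (auto simp: assms)
  also have "\<dots> = (\<Sum>x\<in>E. card {xs \<in> permutations_of_set (E - {x}). P (x # xs)})"
    by (simp add: card_image)
  finally show ?thesis .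
qed

lemma card_permutations_precedes_rec:
  assumes "finite E" "A \<subseteq> E" "B \<subseteq> E" "A \<inter> B = {e}"
  shows "card {xs \<in> permutations_of_set E. precedes xs A B} =
           (\<Sum>x\<in>E - (A \<union> B). card {xs \<in> permutations_of_set (E - {x}). precedes xs A B})
         + (\<Sum>x\<in>A - {e}. card {xs \<in> permutations_of_set (E - {x}). precedes xs (A - {x}) B})
         + (if A = {e} then fact (card E - 1) else 0)"
proof -
  define h where "h x = card {ys \<in> permutations_of_set (E - {x}). precedes (x # ys) A B}" for x
  have eA: "e \<in> A" and eB: "e \<in> B" using assms by auto
  have "E \<noteq> {}" using assms eA by auto
  then have "card {xs \<in> permutations_of_set E. precedes xs A B} = (\<Sum>x\<in>E. h x)"
    unfolding h_def by (rule card_filter_permutations_of_set[OF assms(1)])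
  also have "\<dots> = (\<Sum>x\<in>E - (A \<union> B). h x) + (\<Sum>x\<in>A - {e}. h x) + h e + (\<Sum>x\<in>B - {e}. h x)"
  proof -
    have "A \<union> B \<subseteq> E" "(A - {e}) \<inter> B = {}" "A \<union> B = (A - {e}) \<union> B" "finite A" "finite B"
      using assms by (auto intro: finite_subset)
    then show ?thesis
      using assms eB by (simp add: sum.subset_diff[of "A \<union> B" E] sum.union_disjoint sum.remove)
  qed
  also have "(\<Sum>x\<in>E - (A \<union> B). h x) =
               (\<Sum>x\<in>E - (A \<union> B). card {xs \<in> permutations_of_set (E - {x}). precedes xs A B})"
    by (rule sum.cong) (auto simp: h_def precedes_Cons Diff_triv)
  also have "(\<Sum>x\<in>A - {e}. h x) =
               (\<Sum>x\<in>A - {e}. card {xs \<in> permutations_of_set (E - {x}). precedes xs (A - {x}) B})"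
  proof (intro sum.cong refl)
    fix x assume "x \<in> A - {e}"
    then have "x \<notin> B" using assms(4) by blast
    then show "h x = card {xs \<in> permutations_of_set (E - {x}). precedes xs (A - {x}) B}"
      by (simp add: h_def precedes_Cons Diff_triv)
  qed
  also have "h e = (if A = {e} then fact (card E - 1) else 0)"
  proof (cases "A = {e}")
    case True
    then show ?thesis using assms eB by (simp add: h_def precedes_Cons precedes_def)
  next
    case False
    then have "\<not> A \<subseteq> {e}" using eA by blast
    then show ?thesis using False eB by (simp add: h_def precedes_Cons)
  qed
  also have "(\<Sum>x\<in>B - {e}. h x) = 0"
    using eA by (intro sum.neutral) (auto simp: h_def precedes_Cons)
  finally show ?thesis by simp
qed

text \<open>
  The element e has to follow the rest of A and precede the rest of B: this leaves
  (card A - 1)! (card B - 1)! of the (card (A \<union> B))! relative orders of A \<union> B.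
\<close>

lemma card_permutations_precedes:
  assumes "finite E" "A \<subseteq> E" "B \<subseteq> E" "A \<inter> B = {e}"
  shows "card {xs \<in> permutations_of_set E. precedes xs A B} * fact (card (A \<union> B))
           = fact (card E) * fact (card A - 1) * fact (card B - 1)"
  using assms
proof (induction "card E" arbitrary: E A)
  case 0
  then show ?case by auto
next
  case (Suc N)
  let ?count = "\<lambda>E A. card {xs \<in> permutations_of_set E. precedes xs A B}"
  define a where "a = card A - 1"
  define b where "b = card B - 1"
  define c where "c = card (A \<union> B)"
  have cardE: "card E = Suc N" using Suc.hyps(2) by simp
  have fin: "finite A" "finite B" using Suc.prems by (meson finite_subset)+
  have eA: "e \<in> A" and eB: "e \<in> B" using Suc.prems by auto
  have "card A > 0" "card B > 0" using eA eB fin by (auto simp: card_gt_0_iff)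
  then have c: "c = a + b + 1"
    using card_Un_Int[OF fin] Suc.prems by (simp add: a_def b_def c_def)
  have outside: "?count (E - {x}) A * fact c = fact N * fact a * fact b" if "x \<in> E - (A \<union> B)" for x
  proof -
    have "?count (E - {x}) A * fact c = fact (card (E - {x})) * fact a * fact b"
      unfolding c_def a_def b_def by (rule Suc.hyps(1)) (use Suc.prems cardE that in auto)
    then show ?thesis using that cardE Suc.prems by simp
  qed
  have in_A: "?count (E - {x}) (A - {x}) * fact c = c * (fact N * fact (a - 1) * fact b)"
    if "x \<in> A - {e}" for x
  proof -
    have xB: "x \<notin> B" and xE: "x \<in> E" using that Suc.prems by auto
    have "?count (E - {x}) (A - {x}) * fact (card ((A - {x}) \<union> B))
            = fact (card (E - {x})) * fact (card (A - {x}) - 1) * fact b"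
      unfolding b_def by (rule Suc.hyps(1)) (use Suc.prems cardE that xB in auto)
    moreover have "(A - {x}) \<union> B = (A \<union> B) - {x}" using xB by auto
    ultimately have "?count (E - {x}) (A - {x}) * fact (c - 1) = fact N * fact (a - 1) * fact b"
      using that xE cardE fin by (simp add: a_def c_def)
    moreover have "fact c = c * fact (c - 1)" by (simp add: c)
    ultimately show ?thesis by (simp only: mult.left_commute[of _ c])
  qed
  have "card (E - (A \<union> B)) = Suc N - c"
    using Suc.prems fin cardE by (simp add: c_def card_Diff_subset)
  moreover have "card (A - {e}) = a" using eA by (simp add: a_def)
  moreover have "A = {e} \<longleftrightarrow> a = 0"
    using eA fin by (auto simp: a_def card_le_Suc0_iff_eq)
  moreover have "fact c = c * fact b" if "a = 0" using that c by simp
  ultimately have "?count E A * fact c = (Suc N - c) * (fact N * fact a * fact b)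
      + a * (c * (fact N * fact (a - 1) * fact b)) + (if a = 0 then c * (fact N * fact b) else 0)"
    using card_permutations_precedes_rec[OF Suc.prems] cardE
    by (simp add: sum_distrib_right distrib_right outside in_A)
  also have "\<dots> = (Suc N - c + c) * (fact N * fact a * fact b)"
    by (cases a) (simp_all add: algebra_simps)
  also have "Suc N - c + c = Suc N"
    using card_mono[OF Suc.prems(1), of "A \<union> B"] Suc.prems cardE by (simp add: c_def)
  finally show ?case by (simp add: a_def b_def c_def cardE algebra_simps)
qed

lemma card_permutations_precedes_binomial:
  assumes "finite E" "A \<subseteq> E" "B \<subseteq> E" "A \<inter> B = {e}"
  shows "card A * card {xs \<in> permutations_of_set E. precedes xs A B} * (card (A \<union> B) choose card A)
           = fact (card E)"
proof -
  let ?count = "card {xs \<in> permutations_of_set E. precedes xs A B}"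
  define a where "a = card A"
  define b where "b = card B"
  define c where "c = card (A \<union> B)"
  have fin: "finite A" "finite B" using assms by (meson finite_subset)+
  have "a > 0" "b > 0" using assms fin by (auto simp: a_def b_def card_gt_0_iff)
  moreover have "c = a + b - 1"
    using card_Un_Int[OF fin] assms by (simp add: a_def b_def c_def)
  ultimately have binom: "fact a * fact (b - 1) * (c choose a) = fact c"
    using binomial_fact_lemma[of a c] by simp
  have fact_a: "fact a = a * fact (a - 1)"
    using \<open>a > 0\<close> by (cases a) simp_all
  have "(a * ?count * (c choose a)) * (fact (a - 1) * fact (b - 1)) = ?count * fact c"
    unfolding binom[symmetric] fact_a by (simp only: ac_simps)
  also have "\<dots> = fact (card E) * (fact (a - 1) * fact (b - 1))"
    using card_permutations_precedes[OF assms] by (simp only: a_def b_def c_def mult.assoc)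
  finally show ?thesis by (simp add: a_def c_def)
qed

lemma sum_nonempty_subsets_by_card:
  fixes g :: "nat \<Rightarrow> 'b::comm_semiring_1"
  assumes "finite A"
  shows "(\<Sum>S | S \<subseteq> A \<and> S \<noteq> {}. g (card S)) = (\<Sum>i = 1..card A. of_nat (card A choose i) * g i)"
proof -
  let ?S = "{S. S \<subseteq> A \<and> S \<noteq> {}}"
  have "card ` ?S \<subseteq> {1..card A}"
    using assms by (auto simp: card_mono Suc_le_eq card_gt_0_iff dest: finite_subset)
  then have "(\<Sum>S\<in>?S. g (card S)) = (\<Sum>i = 1..card A. \<Sum>S\<in>{S. S \<in> ?S \<and> card S = i}. g (card S))"
    using assms by (intro sum.group[symmetric]) simp_all
  also have "\<dots> = (\<Sum>i = 1..card A. \<Sum>S\<in>{S. S \<subseteq> A \<and> card S = i}. g i)"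
    by (intro sum.cong) auto
  also have "\<dots> = (\<Sum>i = 1..card A. of_nat (card A choose i) * g i)"
    using assms by (simp add: n_subsets)
  finally show ?thesis .
qed

lemma card_UN_inclusion_exclusion:
  fixes A :: "'i \<Rightarrow> 'a set"
  assumes "finite I" "\<And>i. i \<in> I \<Longrightarrow> finite (A i)"
  shows "(of_nat (card (\<Union>i\<in>I. A i)) :: 'b::ring_1)
           = (\<Sum>S | S \<subseteq> I \<and> S \<noteq> {}. (-1) ^ (card S + 1) * of_nat (card (\<Inter>i\<in>S. A i)))"
proof -
  let ?U = "\<Union>i\<in>I. A i"
  have "(of_nat (card (?U \<inter> ?U)) :: 'b)
          = (\<Sum>S | S \<subseteq> I \<and> S \<noteq> {}. (-1) ^ (card S + 1) * of_nat (card ((\<Inter>i\<in>S. A i) \<inter> ?U)))"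
  proof (rule Incl_Excl_UN[OF _ assms(1)])
    fix X Y :: "'a set" assume "disjnt X Y"
    then show "(of_nat (card ((X \<union> Y) \<inter> ?U)) :: 'b)
                 = of_nat (card (X \<inter> ?U)) + of_nat (card (Y \<inter> ?U))"
      using assms by (subst Int_Un_distrib2, subst card_Un_disjnt) (auto simp: disjnt_def)
  qed
  moreover have "(\<Inter>i\<in>S. A i) \<inter> ?U = (\<Inter>i\<in>S. A i)" if "S \<subseteq> I" "S \<noteq> {}" for S
    using that by blast
  ultimately show ?thesis by simp
qed

section \<open>Perfect matchings of the complete hypergraph\<close>

lemma all_edges_subset_Pow: "all_edges V r \<subseteq> Pow V"
  by (auto simp: all_edges_def)

lemma finite_all_edges: "finite V \<Longrightarrow> finite (all_edges V r)"
  by (rule finite_subset[OF all_edges_subset_Pow]) simp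

lemma card_all_edges: "finite V \<Longrightarrow> card (all_edges V r) = card V choose r"
  by (simp add: all_edges_def n_subsets)

lemma card_edges_meeting:
  assumes "finite V" "S \<subseteq> V"
  shows "card {f \<in> all_edges V r. f \<inter> S \<noteq> {}} = (card V choose r) - (card V - card S choose r)"
proof -
  have "{f \<in> all_edges V r. f \<inter> S \<noteq> {}} = all_edges V r - all_edges (V - S) r"
    "all_edges (V - S) r \<subseteq> all_edges V r"
    by (auto simp: all_edges_def)
  then show ?thesis
    using assms finite_subset[OF assms(2,1)]
    by (simp add: card_Diff_subset card_all_edges finite_all_edges)
qed

lemma card_edges_containing:
  assumes "finite V" "v \<in> V" "r \<ge> 1"
  shows "card {e \<in> all_edges V r. v \<in> e} = card V - 1 choose (r - 1)"
proof -
  have "{e \<in> all_edges V r. v \<in> e} = {e \<in> all_edges V r. e \<inter> {v} \<noteq> {}}" by auto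
  then show ?thesis
    using card_edges_meeting[of V "{v}" r] assms by (cases r; cases "card V") simp_all
qed

lemma is_matching_iff:
  assumes "H \<subseteq> Pow V"
  shows "is_matching V H M \<longleftrightarrow> M \<subseteq> H \<and> \<Union>M = V \<and> pairwise disjnt M"
proof
  assume matching: "is_matching V H M"
  then have "M \<subseteq> H" by (simp add: is_matching_def)
  moreover have "\<Union>M = V"
    using matching \<open>M \<subseteq> H\<close> assms by (auto simp: is_matching_def)
  moreover have "disjnt e g" if "e \<in> M" "g \<in> M" "e \<noteq> g" for e g
    using matching that \<open>M \<subseteq> H\<close> assms unfolding is_matching_def disjnt_def by blast
  ultimately show "M \<subseteq> H \<and> \<Union>M = V \<and> pairwise disjnt M"
    by (simp add: pairwise_def)
next
  assume M: "M \<subseteq> H \<and> \<Union>M = V \<and> pairwise disjnt M"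
  have "\<exists>!e. e \<in> M \<and> v \<in> e" if "v \<in> V" for v
  proof -
    obtain e where "e \<in> M" "v \<in> e" using M \<open>v \<in> V\<close> by blast
    moreover have "g = e" if "g \<in> M" "v \<in> g" for g
      using M that \<open>e \<in> M\<close> \<open>v \<in> e\<close> unfolding pairwise_def disjnt_def by blast
    ultimately show ?thesis by blast
  qed
  with M show "is_matching V H M" by (simp add: is_matching_def)
qed

lemma is_matching_subgraph_iff:
  "H \<subseteq> K \<Longrightarrow> is_matching V H M \<longleftrightarrow> is_matching V K M \<and> M \<subseteq> H"
  by (auto simp: is_matching_def)

lemmas is_perfect_matching_iff = is_matching_iff[OF all_edges_subset_Pow]

lemma card_perfect_matching:
  assumes "finite V" "is_matching V (all_edges V r) M"
  shows "card V = card M * r"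
proof -
  have M: "M \<subseteq> all_edges V r" "\<Union>M = V" "pairwise disjnt M"
    using assms(2) by (simp_all add: is_perfect_matching_iff)
  have "finite e" if "e \<in> M" for e
    using that M(1) assms(1) by (auto simp: all_edges_def intro: finite_subset)
  with M(3) have "card (\<Union>M) = sum card M"
    by (rule card_Union_disjoint)
  then have "card V = sum card M"
    using M(2) by simp
  also have "\<dots> = (\<Sum>e\<in>M. r)"
    using M(1) by (intro sum.cong) (auto simp: all_edges_def)
  also have "\<dots> = card M * r" by simp
  finally show ?thesis .
qed

lemma finite_perfect_matchings: "finite V \<Longrightarrow> finite {M. is_matching V (all_edges V r) M}"
  by (rule finite_subset[of _ "Pow (all_edges V r)"])
     (auto simp: is_perfect_matching_iff finite_all_edges)

lemma perfect_matchings_decompose: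
  assumes "v \<in> V"
  shows "{M. is_matching V (all_edges V r) M} =
           (\<Union>e\<in>{e \<in> all_edges V r. v \<in> e}.
              insert e ` {M. is_matching (V - e) (all_edges (V - e) r) M})"
proof (intro equalityI subsetI)
  fix M assume "M \<in> {M. is_matching V (all_edges V r) M}"
  then have M: "M \<subseteq> all_edges V r" "\<Union>M = V" "pairwise disjnt M"
    by (simp_all add: is_perfect_matching_iff)
  then obtain e where e: "e \<in> M" "v \<in> e" using assms by blast
  have disj: "g \<inter> e = {}" if "g \<in> M - {e}" for g
    using M(3) e(1) that by (auto simp: pairwise_def disjnt_def)
  have "M - {e} \<subseteq> all_edges (V - e) r"
    using M(1) disj by (auto simp: all_edges_def)
  moreover have "\<Union>(M - {e}) = V - e"
    using M(2) e disj by auto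
  moreover have "pairwise disjnt (M - {e})"
    using M(3) by (rule pairwise_subset) auto
  ultimately have "M - {e} \<in> {M. is_matching (V - e) (all_edges (V - e) r) M}"
    by (simp add: is_perfect_matching_iff)
  moreover have "M = insert e (M - {e})" using e by auto
  ultimately show "M \<in> (\<Union>e\<in>{e \<in> all_edges V r. v \<in> e}.
                          insert e ` {M. is_matching (V - e) (all_edges (V - e) r) M})"
    using M(1) e by blast
next
  fix M assume "M \<in> (\<Union>e\<in>{e \<in> all_edges V r. v \<in> e}.
                          insert e ` {M. is_matching (V - e) (all_edges (V - e) r) M})"
  then obtain e M' where e: "e \<in> all_edges V r" and M: "M = insert e M'"
    and M': "M' \<subseteq> all_edges (V - e) r" "\<Union>M' = V - e" "pairwise disjnt M'"
    by (auto simp: is_perfect_matching_iff)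
  have "insert e M' \<subseteq> all_edges V r"
    using e M'(1) by (auto simp: all_edges_def)
  moreover have "\<Union>(insert e M') = V"
    using e M'(2) by (auto simp: all_edges_def)
  moreover have "pairwise disjnt (insert e M')"
    using M'(1,3) by (auto simp: pairwise_insert disjnt_def all_edges_def)
  ultimately show "M \<in> {M. is_matching V (all_edges V r) M}"
    by (simp add: is_perfect_matching_iff M)
qed

lemma card_perfect_matchings_decompose:
  assumes "finite V" "v \<in> V"
  shows "card {M. is_matching V (all_edges V r) M} =
           (\<Sum>e\<in>{e \<in> all_edges V r. v \<in> e}. card {M. is_matching (V - e) (all_edges (V - e) r) M})"
proof -
  let ?PM = "\<lambda>U. {M. is_matching U (all_edges U r) M}"
  have edge_notin: "e \<notin> M" if "v \<in> e" "v \<in> e'" "M \<in> ?PM (V - e')" for e e' M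
    using that unfolding mem_Collect_eq is_perfect_matching_iff by (auto simp: all_edges_def)
  have "card (?PM V) = card (\<Union>e\<in>{e \<in> all_edges V r. v \<in> e}. insert e ` ?PM (V - e))"
    using perfect_matchings_decompose[OF assms(2)] by simp
  also have "\<dots> = (\<Sum>e\<in>{e \<in> all_edges V r. v \<in> e}. card (insert e ` ?PM (V - e)))"
  proof (rule card_UN_disjoint)
    show "finite {e \<in> all_edges V r. v \<in> e}"
      using assms(1) by (simp add: finite_all_edges)
    show "\<forall>e\<in>{e \<in> all_edges V r. v \<in> e}. finite (insert e ` ?PM (V - e))"
      using assms(1) by (simp add: finite_perfect_matchings)
    show "\<forall>e\<in>{e \<in> all_edges V r. v \<in> e}. \<forall>e'\<in>{e \<in> all_edges V r. v \<in> e}. e \<noteq> e' \<longrightarrow>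
            insert e ` ?PM (V - e) \<inter> insert e' ` ?PM (V - e') = {}"
      using edge_notin by blast
  qed
  also have "\<dots> = (\<Sum>e\<in>{e \<in> all_edges V r. v \<in> e}. card (?PM (V - e)))"
  proof (intro sum.cong refl card_image inj_onI)
    fix e M M' assume "e \<in> {e \<in> all_edges V r. v \<in> e}" "M \<in> ?PM (V - e)" "M' \<in> ?PM (V - e)"
      "insert e M = insert e M'"
    then show "M = M'" using edge_notin[of e e M] edge_notin[of e e M'] by (simp add: insert_ident)
  qed
  finally show ?thesis .
qed

lemma card_perfect_matchings:
  assumes "finite V" "r \<ge> 1" "card V = r * n"
  shows "card {M. is_matching V (all_edges V r) M} * fact r ^ n * fact n = fact (r * n)"
  using assms
proof (induction n arbitrary: V)
  case 0
  then have "{M. is_matching V (all_edges V r) M} = {{}}"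
    unfolding is_perfect_matching_iff by (auto simp: all_edges_def)
  then show ?case by simp
next
  case (Suc n)
  let ?count = "\<lambda>U. card {M. is_matching U (all_edges U r) M}"
  obtain v where v: "v \<in> V" using Suc.prems by fastforce
  have "?count (V - e) * fact r ^ n * fact n = fact (r * n)"
    if "e \<in> {e \<in> all_edges V r. v \<in> e}" for e
    using that Suc by (intro Suc.IH) (auto simp: all_edges_def card_Diff_subset finite_subset)
  then have IH: "?count V * fact r ^ n * fact n = (card V - 1 choose (r - 1)) * fact (r * n)"
    using card_perfect_matchings_decompose[OF Suc.prems(1) v]
      card_edges_containing[OF Suc.prems(1) v Suc.prems(2)] by (simp add: sum_distrib_right)
  have "fact (r - 1) * fact (r * n) * (card V - 1 choose (r - 1)) = fact (card V - 1)"
    using binomial_fact_lemma[of "r - 1" "card V - 1"] Suc.prems by (cases r) simp_all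
  moreover have "fact r = r * fact (r - 1)" "fact (card V) = card V * fact (card V - 1)"
    using Suc.prems by (cases r; simp)+
  ultimately have "?count V * fact r ^ n * fact n * (fact r * Suc n) = fact (card V)"
    unfolding IH using Suc.prems(3) by (simp only: ac_simps)
  then show ?case
    using Suc.prems(3) by (simp only: power_Suc fact_Suc of_nat_id ac_simps)
qed

section \<open>The stopped hypergraph\<close>

lemma Union_set_take_subset:
  assumes "xs \<in> permutations_of_set E" "\<Union>E = V"
  shows "\<Union>(set (take k xs)) \<subseteq> V"
  using assms set_take_subset[of k xs] by (auto dest: permutations_of_setD)

lemma less_stop_time_iff:
  assumes "xs \<in> permutations_of_set E" "\<Union>E = V"
  shows "k < stop_time V xs \<longleftrightarrow> \<Union>(set (take k xs)) \<noteq> V"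
proof
  assume "k < stop_time V xs"
  then show "\<Union>(set (take k xs)) \<noteq> V"
    unfolding stop_time_def by (rule not_less_Least)
next
  assume uncovered: "\<Union>(set (take k xs)) \<noteq> V"
  have "\<Union>(set (take (length xs) xs)) = V"
    using assms by (simp add: permutations_of_setD)
  then have "\<Union>(set (take (stop_time V xs) xs)) = V"
    unfolding stop_time_def by (rule LeastI)
  show "k < stop_time V xs"
  proof (rule ccontr)
    assume "\<not> k < stop_time V xs"
    then have "set (take (stop_time V xs) xs) \<subseteq> set (take k xs)"
      by (simp add: set_take_subset_set_take)
    then have "V \<subseteq> \<Union>(set (take k xs))"
      using \<open>\<Union>(set (take (stop_time V xs) xs)) = V\<close> by blast
    then show False using uncovered Union_set_take_subset[OF assms, of k] by blast
  qed
qed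

lemma subset_stopped_graph_iff:
  assumes "xs \<in> permutations_of_set E" "\<Union>E = V" "M \<subseteq> E" "M \<noteq> {}"
  shows "M \<subseteq> stopped_graph V xs \<longleftrightarrow> (\<exists>v\<in>V. precedes xs M {f \<in> E. v \<in> f})"
proof -
  have set_xs: "set xs = E" using assms(1) by (rule permutations_of_setD)
  then have "finite M" using assms(3) finite_subset by blast
  define T where "T = Max (position xs ` M)"
  have "M \<subseteq> stopped_graph V xs \<longleftrightarrow> T < stop_time V xs"
    using \<open>finite M\<close> assms(3,4) set_xs
    by (auto simp: stopped_graph_def in_set_take_iff_position T_def)
  also have "\<dots> \<longleftrightarrow> \<Union>(set (take T xs)) \<noteq> V"
    by (rule less_stop_time_iff[OF assms(1,2)])
  also have "\<dots> \<longleftrightarrow> (\<exists>v\<in>V. \<forall>f\<in>set (take T xs). v \<notin> f)"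
    using Union_set_take_subset[OF assms(1,2), of T] by blast
  also have "\<dots> \<longleftrightarrow> (\<exists>v\<in>V. \<forall>f\<in>E. v \<in> f \<longrightarrow> T \<le> position xs f)"
  proof -
    have "(\<forall>f\<in>set (take T xs). v \<notin> f) \<longleftrightarrow> (\<forall>f\<in>E. v \<in> f \<longrightarrow> T \<le> position xs f)" for v
      using set_xs by (auto simp: in_set_take_iff_position)
    then show ?thesis by simp
  qed
  also have "\<dots> \<longleftrightarrow> (\<exists>v\<in>V. precedes xs M {f \<in> E. v \<in> f})"
    using \<open>finite M\<close> assms(4) by (auto simp: precedes_def T_def)
  finally show ?thesis .
qed

lemma card_precedes_edges_meeting:
  assumes "finite V" "is_matching V (all_edges V r) M" "e \<in> M" "S \<subseteq> e" "S \<noteq> {}"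
  defines "W \<equiv> {f \<in> all_edges V r. f \<inter> S \<noteq> {}}"
  shows "card M * card {xs \<in> permutations_of_set (all_edges V r). precedes xs M W}
           * ((card V choose r) - (card V - card S choose r) + card M - 1 choose card M)
         = fact (card V choose r)"
proof -
  have M: "M \<subseteq> all_edges V r" "\<Union>M = V" "pairwise disjnt M"
    using assms(2) by (simp_all add: is_perfect_matching_iff)
  have "S \<subseteq> V" using assms(3,4) M(2) by blast
  have "M \<inter> W = {e}"
  proof
    show "{e} \<subseteq> M \<inter> W" using assms(3-5) M(1) by (auto simp: W_def)
    show "M \<inter> W \<subseteq> {e}"
      using assms(3,4) M(3) by (auto simp: W_def pairwise_def disjnt_def)
  qed
  moreover have "W \<subseteq> all_edges V r" by (auto simp: W_def)
  moreover have "finite (all_edges V r)"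
    using assms(1) by (simp add: finite_all_edges)
  ultimately have "card M * card {xs \<in> permutations_of_set (all_edges V r). precedes xs M W}
                     * (card (M \<union> W) choose card M) = fact (card (all_edges V r))"
    using M(1) by (intro card_permutations_precedes_binomial) auto
  moreover have "card (M \<union> W) = card W + card M - 1"
    using card_Un_Int[of M W] \<open>M \<inter> W = {e}\<close> \<open>finite (all_edges V r)\<close> M(1) \<open>W \<subseteq> all_edges V r\<close>
    by (simp add: finite_subset)
  moreover have "card W = (card V choose r) - (card V - card S choose r)"
    unfolding W_def using assms(1) \<open>S \<subseteq> V\<close> by (rule card_edges_meeting)
  ultimately show ?thesis using assms(1) by (simp add: card_all_edges)
qed

lemma card_UN_precedes_edges_at:
  assumes "finite V" "is_matching V (all_edges V r) M" "e \<in> M"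
  defines "B \<equiv> \<lambda>v. {xs \<in> permutations_of_set (all_edges V r).
                        precedes xs M {f \<in> all_edges V r. v \<in> f}}"
  shows "real (card M) * real (card (\<Union>v\<in>e. B v))
         = fact (card V choose r) * (\<Sum>i = 1..r. (-1) ^ (i - 1) * real (r choose i) /
             real ((card V choose r) - (card V - i choose r) + card M - 1 choose card M))"
proof -
  let ?P = "permutations_of_set (all_edges V r)"
  define binom where
    "binom i = real ((card V choose r) - (card V - i choose r) + card M - 1 choose card M)" for i
  have "e \<in> all_edges V r" using assms(2,3) by (auto simp: is_perfect_matching_iff)
  then have "finite e" "card e = r"
    using assms(1) by (auto simp: all_edges_def intro: finite_subset)
  have inter: "real (card M) * real (card (\<Inter>v\<in>S. B v)) = fact (card V choose r) / binom (card S)"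
    if "S \<subseteq> e" "S \<noteq> {}" for S
  proof -
    have "(\<Inter>v\<in>S. B v) = {xs \<in> ?P. precedes xs M {f \<in> all_edges V r. f \<inter> S \<noteq> {}}}"
      using that by (auto simp: B_def precedes_def)
    then have "real (card M) * real (card (\<Inter>v\<in>S. B v)) * binom (card S) = fact (card V choose r)"
      using card_precedes_edges_meeting[OF assms(1-3) that] unfolding binom_def
      by (metis of_nat_fact of_nat_mult)
    moreover have "binom (card S) \<noteq> 0" using calculation by auto
    ultimately show ?thesis by (simp add: field_simps)
  qed
  have "real (card (\<Union>v\<in>e. B v))
          = (\<Sum>S | S \<subseteq> e \<and> S \<noteq> {}. (-1) ^ (card S + 1) * real (card (\<Inter>v\<in>S. B v)))"
    by (rule card_UN_inclusion_exclusion[OF \<open>finite e\<close>]) (simp add: B_def)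
  then have "real (card M) * real (card (\<Union>v\<in>e. B v))
      = (\<Sum>S | S \<subseteq> e \<and> S \<noteq> {}. (-1) ^ (card S + 1) * (real (card M) * real (card (\<Inter>v\<in>S. B v))))"
    by (simp only: sum_distrib_left mult.left_commute)
  also have "\<dots> = (\<Sum>S | S \<subseteq> e \<and> S \<noteq> {}.
                     (-1) ^ (card S + 1) * (fact (card V choose r) / binom (card S)))"
    by (intro sum.cong refl) (simp add: inter)
  also have "\<dots> = (\<Sum>i = 1..r.
                     real (r choose i) * ((-1) ^ (i + 1) * (fact (card V choose r) / binom i)))"
    using sum_nonempty_subsets_by_card[OF \<open>finite e\<close>,
            of "\<lambda>i. (-1) ^ (i + 1) * (fact (card V choose r) / binom i)"] \<open>card e = r\<close>
    by simp
  also have "\<dots> = fact (card V choose r) * (\<Sum>i = 1..r. (-1) ^ (i - 1) * real (r choose i) / binom i)"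
    unfolding sum_distrib_left by (intro sum.cong refl) (auto simp: le_iff_add)
  finally show ?thesis by (simp add: binom_def)
qed

lemma card_matching_subset_stopped_graph:
  assumes "finite V" "V \<noteq> {}" "is_matching V (all_edges V r) M"
  shows "real (card {xs \<in> permutations_of_set (all_edges V r). M \<subseteq> stopped_graph V xs})
         = fact (card V choose r) * (\<Sum>i = 1..r. (-1) ^ (i - 1) * real (r choose i) /
             real ((card V choose r) - (card V - i choose r) + card M - 1 choose card M))"
    (is "_ = ?p")
proof -
  let ?E = "all_edges V r"
  let ?P = "permutations_of_set ?E"
  define B where "B v = {xs \<in> ?P. precedes xs M {f \<in> ?E. v \<in> f}}" for v
  have M: "M \<subseteq> ?E" "\<Union>M = V" "pairwise disjnt M"
    using assms(3) by (simp_all add: is_perfect_matching_iff)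
  have "M \<noteq> {}" using M(2) assms(2) by auto
  have "finite M"
    using M(1) assms(1) finite_all_edges finite_subset by blast
  have "\<Union>?E = V" using M(1,2) all_edges_subset_Pow by blast
  have split: "{xs \<in> ?P. M \<subseteq> stopped_graph V xs} = (\<Union>e\<in>M. \<Union>v\<in>e. B v)"
    using subset_stopped_graph_iff[OF _ \<open>\<Union>?E = V\<close> M(1) \<open>M \<noteq> {}\<close>] M(2) by (auto simp: B_def)
  \<comment> \<open>A witness v in e forces e to be the last edge of M.\<close>
  have card_split: "card (\<Union>e\<in>M. \<Union>v\<in>e. B v) = (\<Sum>e\<in>M. card (\<Union>v\<in>e. B v))"
  proof (rule card_UN_disjoint[OF \<open>finite M\<close>])
    show "\<forall>e\<in>M. finite (\<Union>v\<in>e. B v)"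
      by (auto simp: B_def intro: finite_subset[of _ ?P])
    show "\<forall>e\<in>M. \<forall>e'\<in>M. e \<noteq> e' \<longrightarrow> (\<Union>v\<in>e. B v) \<inter> (\<Union>v\<in>e'. B v) = {}"
    proof (intro ballI impI equals0I)
      fix e e' xs assume e: "e \<in> M" "e' \<in> M" "e \<noteq> e'" and "xs \<in> (\<Union>v\<in>e. B v) \<inter> (\<Union>v\<in>e'. B v)"
      then obtain v v' where "v \<in> e" "v' \<in> e'" "xs \<in> B v" "xs \<in> B v'" by blast
      then have "position xs e' \<le> position xs e" "position xs e \<le> position xs e'" "set xs = ?E"
        using e M(1) by (auto simp: B_def precedes_def dest: permutations_of_setD)
      then show False
        using inj_on_position[of xs] e M(1) by (auto simp: inj_on_def)
    qed
  qed
  have "real (card (\<Union>v\<in>e. B v)) = ?p / real (card M)" if "e \<in> M" for e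
    using card_UN_precedes_edges_at[OF assms(1,3) that] \<open>finite M\<close> \<open>M \<noteq> {}\<close>
    by (simp add: B_def field_simps)
  then show ?thesis
    using \<open>finite M\<close> \<open>M \<noteq> {}\<close> by (simp add: split card_split)
qed

lemma expectation_num_matchings_stopped_graph:
  assumes "finite V"
  shows "measure_pmf.expectation (pmf_of_set (permutations_of_set (all_edges V r)))
           (\<lambda>xs. real (num_matchings V (stopped_graph V xs)))
         = (\<Sum>M | is_matching V (all_edges V r) M.
              real (card {xs \<in> permutations_of_set (all_edges V r). M \<subseteq> stopped_graph V xs}))
           / fact (card V choose r)"
proof -
  let ?E = "all_edges V r"
  let ?P = "permutations_of_set ?E"
  let ?PM = "{M. is_matching V ?E M}"
  have "finite ?E" using assms by (simp add: finite_all_edges)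
  then have "finite ?P" "?P \<noteq> {}" "card ?P = fact (card V choose r)"
    using assms by (simp_all add: card_all_edges)
  have num: "num_matchings V (stopped_graph V xs) = card {M \<in> ?PM. M \<subseteq> stopped_graph V xs}"
    if "xs \<in> ?P" for xs
  proof -
    have "stopped_graph V xs \<subseteq> ?E"
      using permutations_of_setD(1)[OF that] by (auto simp: stopped_graph_def dest: in_set_takeD)
    then show ?thesis
      by (simp add: num_matchings_def is_matching_subgraph_iff)
  qed
  have "(\<Sum>xs\<in>?P. real (num_matchings V (stopped_graph V xs)))
          = (\<Sum>xs\<in>?P. \<Sum>M\<in>{M \<in> ?PM. M \<subseteq> stopped_graph V xs}. 1)"
    by (simp add: num)
  also have "\<dots> = (\<Sum>M\<in>?PM. \<Sum>xs\<in>{xs \<in> ?P. M \<subseteq> stopped_graph V xs}. 1)"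
    using \<open>finite ?P\<close> finite_perfect_matchings[OF assms] by (rule sum.swap_restrict)
  finally show ?thesis
    using \<open>finite ?P\<close> \<open>?P \<noteq> {}\<close> \<open>card ?P = fact (card V choose r)\<close>
    by (simp add: integral_pmf_of_set)
qed

theorem theorem3:
  fixes V :: "'a set" and r n :: nat
  assumes "r \<ge> 2" and "n \<ge> 1" and "finite V" and "card V = r * n"
  shows "measure_pmf.expectation (pmf_of_set (permutations_of_set (all_edges V r)))
           (\<lambda>xs. real (num_matchings V (stopped_graph V xs)))
         = fact (r * n) / ((fact r) ^ n * fact n) *
           (\<Sum>i = 1..r. (-1) ^ (i - 1) * real (r choose i) /
              real (((n * r choose r) - (n * r - i choose r) + n - 1) choose n))"
    (is "_ = _ * ?p")
proof -
  let ?PM = "{M. is_matching V (all_edges V r) M}"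
  have "V \<noteq> {}" "card V = n * r" using assms by auto
  have "real (card {xs \<in> permutations_of_set (all_edges V r). M \<subseteq> stopped_graph V xs})
          = fact (n * r choose r) * ?p" if "M \<in> ?PM" for M
  proof -
    have "card M = n" using card_perfect_matching[OF assms(3), of r M] that assms by simp
    then show ?thesis
      using card_matching_subset_stopped_graph[OF assms(3) \<open>V \<noteq> {}\<close>, of r M] that \<open>card V = n * r\<close>
      by simp
  qed
  then have "measure_pmf.expectation (pmf_of_set (permutations_of_set (all_edges V r)))
               (\<lambda>xs. real (num_matchings V (stopped_graph V xs))) = real (card ?PM) * ?p"
    using expectation_num_matchings_stopped_graph[OF assms(3), of r] \<open>card V = n * r\<close> by simp
  also have "real (card ?PM) = fact (r * n) / (fact r ^ n * fact n)"
  proof -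
    have "real (card ?PM * fact r ^ n * fact n) = fact (r * n)"
      using card_perfect_matchings[OF assms(3) _ assms(4)] assms(1) by simp
    then show ?thesis by (simp add: eq_divide_eq)
  qed
  finally show ?thesis .
qed

end
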